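(* Let $G$ be a group and assume that some finite index subgroup of $G$ embeds in $\mathrm{IET}$. Then $G$ embeds in $\mathrm{IET}$.
   Context: $\mathrm{IET}$ denotes the group of interval exchange transformations of $[0,1)$: bijections of $[0,1)$ that are orientation-preserving piecewise isometries (piecewise translations), left-continuous, with finitely many discontinuity points. *)

theory Defs
  imports Complex_Main "HOL-Algebra.Algebra"
begin

text \<open>An interval exchange transformation of [0,1), represented as a function
real => real which is the identity outside [0,1) (so that composition is
the group law). It is a bijection of [0,1), left-continuous at every point
of (0,1), and off a finite set D it is locally a translation
(f y - y is locally constant), i.e. a piecewise translation with finitely
many discontinuity points.\<close>

definition is_iet :: "(real \<Rightarrow> real) \<Rightarrow> bool" where
  "is_iet f \<longleftrightarrow>
     bij_betw f {0..<1} {0..<1}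
   \<and> (\<forall>x. x \<notin> {0..<1} \<longrightarrow> f x = x)
   \<and> (\<forall>x\<in>{0<..<1}. (f \<longlongrightarrow> f x) (at_left x))
   \<and> (\<exists>D. finite D \<and>
        (\<forall>x\<in>{0..<1} - D. \<exists>e>0. \<forall>y\<in>{0..<1}. \<bar>y - x\<bar> < e \<longrightarrow> f y - y = f x - x))"

definition IET :: "(real \<Rightarrow> real) monoid" where
  "IET = \<lparr>carrier = {f. is_iet f}, monoid.mult = (\<circ>), one = id\<rparr>"

definition embeds_in_IET :: "('a, 'b) monoid_scheme \<Rightarrow> bool" where
  "embeds_in_IET G \<longleftrightarrow> (\<exists>h. h \<in> hom G IET \<and> inj_on h (carrier G))"

end

theory Submission
  imports Defs
begin

text \<open>Let \<phi> embed H into IET and let r_0, ..., r_{m-1} be a transversal of the right cosets of H.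
  An element g permutes the cosets, H r_i g\<inverse> = H r_{\<tau> g i}, with cocycle
  c g i = r_{\<tau> g i} g r_i\<inverse> \<in> H. Cut (0,1/2] into the m blocks (i/2m, (i+1)/2m] and let g send
  block i onto block \<tau> g i by a rescaled copy of \<phi> (c g i), fixing everything else. The cocycle
  identity makes this a homomorphism G \<rightarrow> IET, and g is recovered from where block 0 goes and how.
  Blocks are closed on the right so that the result is again left continuous; accordingly each
  \<phi> (c g i) is moved from [0,1) to (0,1] by fixing 1, which keeps it a left continuous piecewise
  translation because an IET fixes 0 and is the identity near 1.\<close>

section \<open>Interval exchanges\<close>

definition locally_translation_off :: "(real \<Rightarrow> real) \<Rightarrow> real set \<Rightarrow> bool" where
  "locally_translation_off f D \<longleftrightarrow>
     (\<forall>x\<in>{0..<1} - D. \<exists>e>0. \<forall>y\<in>{0..<1}. \<bar>y - x\<bar> < e \<longrightarrow> f y - y = f x - x)"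

lemma iet_fixes_outside: "is_iet f \<Longrightarrow> x \<notin> {0..<1} \<Longrightarrow> f x = x"
  unfolding is_iet_def by blast

lemma iet_bij_betw: "is_iet f \<Longrightarrow> bij_betw f {0..<1} {0..<1}"
  unfolding is_iet_def by blast

lemma iet_maps_to: "is_iet f \<Longrightarrow> x \<in> {0..<1} \<Longrightarrow> f x \<in> {0..<1}"
  using bij_betwE iet_bij_betw by blast

lemma iet_left_continuous: "is_iet f \<Longrightarrow> x \<in> {0<..<1} \<Longrightarrow> (f \<longlongrightarrow> f x) (at_left x)"
  unfolding is_iet_def by blast

lemma iet_breakpoints: "is_iet f \<Longrightarrow> \<exists>D. finite D \<and> locally_translation_off f D"
  unfolding is_iet_def locally_translation_off_def by blast

lemma tendsto_at_left_if_translation_piece: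
  fixes f :: "real \<Rightarrow> real"
  assumes "p < x" and "\<forall>t\<in>{p<..x}. f t - t = f x - x"
  shows "(f \<longlongrightarrow> f x) (at_left x)"
proof -
  have ev: "\<forall>\<^sub>F t in at_left x. t + (f x - x) = f t"
    using eventually_at_left_real[OF assms(1)]
  proof eventually_elim
    case (elim t)
    then have "t \<in> {p<..x}" by simp
    with assms(2) have "f t - t = f x - x" by blast
    then show ?case by simp
  qed
  have "((\<lambda>t. t + (f x - x)) \<longlongrightarrow> x + (f x - x)) (at_left x)"
    by (intro tendsto_intros)
  then show ?thesis using Lim_transform_eventually[OF _ ev] by simp
qed

lemma is_ietI:
  assumes "bij_betw f {0..<1} {0..<1}" and "\<And>x. x \<notin> {0..<1} \<Longrightarrow> f x = x"
    and "\<And>x. x \<in> {0<..<1} \<Longrightarrow> \<exists>p<x. \<forall>t\<in>{p<..x}. f t - t = f x - x"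
    and "finite D" and "locally_translation_off f D"
  shows "is_iet f"
  unfolding is_iet_def
  using assms tendsto_at_left_if_translation_piece unfolding locally_translation_off_def by metis

lemma finite_avoiding_interval_below:
  fixes D :: "'a::linorder set"
  assumes "finite D" and "a < y"
  obtains p where "a \<le> p" "p < y" "{p<..<y} \<inter> D = {}"
proof
  let ?S = "insert a {d\<in>D. d < y}"
  have "finite ?S" using assms(1) by simp
  then show "a \<le> Max ?S" "Max ?S < y" "{Max ?S<..<y} \<inter> D = {}"
    using assms(2) by (auto simp: Max_less_iff)
qed

lemma translation_constant_between_breakpoints:
  assumes D: "locally_translation_off f D" and pq: "0 \<le> p" "q \<le> 1" "{p<..<q} \<inter> D = {}"
    and xy: "x \<in> {p<..<q}" "y \<in> {p<..<q}"
  shows "f x - x = f y - y"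
proof (rule connected_local_const[of "{p<..<q}" x y "\<lambda>t. f t - t"])
  show "\<forall>a\<in>{p<..<q}. \<forall>\<^sub>F b in at a within {p<..<q}. f a - a = f b - b"
  proof
    fix a assume a: "a \<in> {p<..<q}"
    then have "a \<in> {0..<1} - D" using pq by auto
    then obtain e where "e > 0" "\<forall>b\<in>{0..<1}. \<bar>b - a\<bar> < e \<longrightarrow> f b - b = f a - a"
      using D unfolding locally_translation_off_def by blast
    then show "\<forall>\<^sub>F b in at a within {p<..<q}. f a - a = f b - b"
      unfolding eventually_at using pq by (intro exI[of _ e]) (auto simp: dist_real_def)
  qed
qed (use xy in auto)

lemma iet_translation_piece_between_breakpoints:
  assumes f: "is_iet f" and D: "locally_translation_off f D"
    and pq: "0 \<le> p" "p < q" "q < 1" "{p<..<q} \<inter> D = {}" and t: "t \<in> {p<..q}"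
  shows "f t - t = f q - q"
proof -
  define c where "c = f ((p + q) / 2) - (p + q) / 2"
  have c: "f s = s + c" if "s \<in> {p<..<q}" for s
    using translation_constant_between_breakpoints[OF D pq(1) _ pq(4) that, of "(p + q) / 2"] pq
    unfolding c_def by auto
  have "((\<lambda>s. s + c) \<longlongrightarrow> q + c) (at_left q)"
    by (intro tendsto_intros)
  moreover have "\<forall>\<^sub>F s in at_left q. s + c = f s"
    using eventually_at_left_real[OF pq(2)] by eventually_elim (use c in force)
  ultimately have "(f \<longlongrightarrow> q + c) (at_left q)" by (rule Lim_transform_eventually)
  then have "f q = q + c"
    using iet_left_continuous[OF f] pq by (intro tendsto_unique[of "at_left q" f]) auto
  then show ?thesis using t c by (cases "t = q") auto
qed

lemma iet_left_translation_piece: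
  assumes f: "is_iet f" and y: "0 < y" "y < 1"
  obtains p where "0 \<le> p" "p < y" "\<forall>t\<in>{p<..y}. f t - t = f y - y"
proof -
  obtain D where "finite D" "locally_translation_off f D" using iet_breakpoints[OF f] by blast
  moreover obtain p where "0 \<le> p" "p < y" "{p<..<y} \<inter> D = {}"
    using finite_avoiding_interval_below[OF \<open>finite D\<close> y(1)] .
  ultimately show ?thesis
    using iet_translation_piece_between_breakpoints[OF f] y that by blast
qed

lemma iet_fixes_zero:
  assumes f: "is_iet f"
  shows "f 0 = 0"
proof (rule ccontr)
  assume "f 0 \<noteq> 0"
  obtain y where y: "y \<in> {0..<1}" "f y = 0"
    using iet_bij_betw[OF f] by (metis atLeastLessThan_iff bij_betw_iff_bijections order_refl zero_less_one)
  with \<open>f 0 \<noteq> 0\<close> have "0 < y" "y < 1" by (auto simp: order_le_less)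
  then obtain p where p: "0 \<le> p" "p < y" "\<forall>t\<in>{p<..y}. f t - t = f y - y"
    using iet_left_translation_piece[OF f] by blast
  let ?t = "(p + y) / 2"
  have "?t \<in> {p<..y}" using p by auto
  then have "f ?t - ?t = f y - y" using p(3) by blast
  then have "f ?t = ?t - y" using y(2) by linarith
  moreover have "f ?t \<in> {0..<1}" using iet_maps_to[OF f, of ?t] p y by auto
  ultimately show False using p by auto
qed

lemma iet_maps_open_interval:
  assumes f: "is_iet f" and u: "u \<in> {0<..<1}"
  shows "f u \<in> {0<..<1}"
proof -
  have "f u \<noteq> f 0"
    using bij_betw_imp_inj_on[OF iet_bij_betw[OF f]] u by (auto dest: inj_onD)
  then show ?thesis using iet_maps_to[OF f, of u] iet_fixes_zero[OF f] u by auto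
qed

lemma iet_bounded_away_from_one:
  assumes f: "is_iet f" and a: "0 \<le> a" "a < 1"
  obtains M where "M < 1" "\<forall>y\<in>{0..a}. f y \<le> M"
proof -
  obtain D where D: "finite D" "locally_translation_off f D" using iet_breakpoints[OF f] by blast
  define E where "E = {0, a} \<union> D \<inter> {0..a}"
  have E: "finite E" "E \<subseteq> {0..a}" "0 \<in> E" "a \<in> E" using D(1) a unfolding E_def by auto
  have "f y \<le> Max (f ` E)" if y: "y \<in> {0..a}" "y \<notin> E" for y
  proof -
    define p where "p = Max {e\<in>E. e < y}"
    define q where "q = Min {e\<in>E. y \<le> e}"
    have "0 < y" using y E(3) by (cases "y = 0") auto
    have "p \<in> {e\<in>E. e < y}" unfolding p_def by (rule Max_in) (use E \<open>0 < y\<close> in auto)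
    moreover have "q \<in> {e\<in>E. y \<le> e}" unfolding q_def by (rule Min_in) (use E y in auto)
    ultimately have p: "p \<in> E" "p < y" and q: "q \<in> E" "y \<le> q" by auto
    have "{p<..<q} \<inter> D = {}"
    proof (intro equals0I)
      fix d assume d: "d \<in> {p<..<q} \<inter> D"
      then have "d \<in> E" using p q E(2) unfolding E_def by auto
      show False
      proof (cases "d < y")
        case True
        then have "d \<le> p" unfolding p_def using \<open>d \<in> E\<close> E(1) by (intro Max_ge) auto
        then show False using d by auto
      next
        case False
        then have "q \<le> d" unfolding q_def using \<open>d \<in> E\<close> E(1) by (intro Min_le) auto
        then show False using d by auto
      qed
    qed
    moreover have "0 \<le> p" "p < q" "q < 1" "y \<in> {p<..q}" using p q E(2) a by auto
    ultimately have "f y - y = f q - q"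
      using iet_translation_piece_between_breakpoints[OF f D(2)] by blast
    moreover have "f q \<le> Max (f ` E)" using q E(1) by simp
    ultimately show ?thesis using q by linarith
  qed
  moreover have "Max (f ` E) < 1"
    using E a iet_maps_to[OF f] by (subst Max_less_iff) force+
  ultimately show ?thesis using that[of "Max (f ` E)"] E(1) by force
qed

lemma iet_eq_id_near_one:
  assumes f: "is_iet f"
  obtains a where "0 \<le> a" "a < 1" "\<forall>y\<in>{a<..<1}. f y = y"
proof -
  obtain D where D: "finite D" "locally_translation_off f D" using iet_breakpoints[OF f] by blast
  obtain a where a: "0 \<le> a" "a < 1" "{a<..<1} \<inter> D = {}"
    using finite_avoiding_interval_below[OF D(1), of 0 1] by auto
  define c where "c = f ((a + 1) / 2) - (a + 1) / 2"
  have c: "f y = y + c" if "y \<in> {a<..<1}" for y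
    using translation_constant_between_breakpoints[OF D(2) a(1) _ a(3) that, of "(a + 1) / 2"] a
    unfolding c_def by auto
  have "c = 0"
  proof (rule ccontr)
    assume "c \<noteq> 0"
    then consider "c > 0" | "c < 0" by linarith
    then show False
    proof cases
      case 1
      define y where "y = max ((a + 1) / 2) (1 - c / 2)"
      have y: "y \<in> {a<..<1}" using a 1 unfolding y_def by (auto simp: less_max_iff_disj)
      then show False using c[OF y] iet_maps_to[OF f, of y] a 1 unfolding y_def by auto
    next
      case 2
      \<comment> \<open>then points just below 1 are hit neither from (a,1) nor from [0,a]\<close>
      obtain M where M: "M < 1" "\<forall>y\<in>{0..a}. f y \<le> M"
        using iet_bounded_away_from_one[OF f a(1,2)] .
      define z where "z = (max (max M (1 + c)) a + 1) / 2"
      have z: "M < z" "1 + c < z" "a < z" "z < 1" using M(1) a 2 unfolding z_def by (auto simp: max_def)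
      then have "z \<in> {0..<1}" using a by auto
      then obtain y where y: "y \<in> {0..<1}" "f y = z"
        using iet_bij_betw[OF f] by (metis bij_betw_iff_bijections)
      show False
      proof (cases "y \<le> a")
        case True
        then have "f y \<le> M" using M(2) y(1) by auto
        then show False using y(2) z(1) by simp
      next
        case False then show False using y c[of y] z(2) by auto
      qed
    qed
  qed
  then show ?thesis using that a c by auto
qed

lemma iet_idempotent_eq_id:
  assumes f: "is_iet f" and "f \<circ> f = f"
  shows "f = id"
proof
  fix x
  show "f x = id x"
  proof (cases "x \<in> {0..<1}")
    case True
    have "f (f x) = f x" using assms(2) by (metis comp_apply)
    then show ?thesis
      using bij_betw_imp_inj_on[OF iet_bij_betw[OF f]] iet_maps_to[OF f True] True
      by (auto dest: inj_onD)
  qed (simp add: iet_fixes_outside[OF f])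
qed

lemma iet_eqI:
  assumes f: "is_iet f" and g: "is_iet g" and eq: "\<And>v. v \<in> {0<..<1} \<Longrightarrow> f v = g v"
  shows "f = g"
proof
  fix x
  show "f x = g x"
  proof (cases "x \<in> {0<..<1}")
    case False
    then have "x = 0 \<or> x \<notin> {0..<1}" by auto
    then show ?thesis
      using iet_fixes_zero[OF f] iet_fixes_zero[OF g] iet_fixes_outside[OF f] iet_fixes_outside[OF g]
      by auto
  qed (rule eq)
qed

definition close_at_one :: "(real \<Rightarrow> real) \<Rightarrow> real \<Rightarrow> real" where
  "close_at_one f u = (if u = 1 then 1 else f u)"

lemma close_at_one_id [simp]: "close_at_one id = id"
  by (auto simp: close_at_one_def)

lemma close_at_one_maps_to:
  assumes "is_iet f" and "u \<in> {0<..1}"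
  shows "close_at_one f u \<in> {0<..1}" and "close_at_one f u = 1 \<longleftrightarrow> u = 1"
  using iet_maps_open_interval[OF assms(1), of u] assms(2) by (auto simp: close_at_one_def)

lemma close_at_one_comp:
  assumes "is_iet g" and "u \<in> {0<..1}"
  shows "close_at_one f (close_at_one g u) = close_at_one (f \<circ> g) u"
  using close_at_one_maps_to[OF assms] by (auto simp: close_at_one_def)

lemma close_at_one_left_translation_piece:
  assumes f: "is_iet f" and u: "u \<in> {0<..1}"
  obtains p where "0 \<le> p" "p < u" "\<forall>s\<in>{p<..u}. close_at_one f s - s = close_at_one f u - u"
proof (cases "u = 1")
  case True
  obtain a where "0 \<le> a" "a < 1" "\<forall>y\<in>{a<..<1}. f y = y" using iet_eq_id_near_one[OF f] .
  then show ?thesis using that[of a] True by (auto simp: close_at_one_def)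
next
  case False
  obtain p where p: "0 \<le> p" "p < u" "\<forall>t\<in>{p<..u}. f t - t = f u - u"
    using iet_left_translation_piece[OF f, of u] u False by auto
  have "close_at_one f s - s = close_at_one f u - u" if s: "s \<in> {p<..u}" for s
  proof -
    have "f s - s = f u - u" using p(3) s by blast
    then show ?thesis using s u False by (simp add: close_at_one_def)
  qed
  then show ?thesis using that p by blast
qed

lemma close_at_one_local_translation:
  assumes "locally_translation_off f D" and "u \<in> {0<..<1} - D"
  obtains e where "e > 0"
    "\<forall>s\<in>{0<..<1}. \<bar>s - u\<bar> < e \<longrightarrow> close_at_one f s - s = close_at_one f u - u"
proof -
  have "u \<in> {0..<1} - D" using assms(2) by auto
  then obtain e where e: "e > 0" "\<forall>s\<in>{0..<1}. \<bar>s - u\<bar> < e \<longrightarrow> f s - s = f u - u"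
    using assms(1) unfolding locally_translation_off_def by blast
  have "close_at_one f s - s = close_at_one f u - u" if s: "s \<in> {0<..<1}" "\<bar>s - u\<bar> < e" for s
  proof -
    have "s \<in> {0..<1}" using s by simp
    then have "f s - s = f u - u" using e(2) s(2) by blast
    moreover have "s \<noteq> 1" "u \<noteq> 1" using s assms(2) by auto
    ultimately show ?thesis by (simp add: close_at_one_def)
  qed
  then show ?thesis using that e(1) by blast
qed

section \<open>Block maps\<close>

text \<open>Block i of (0,1/2] is (i/2m, (i+1)/2m], and block_point m i v with v \<in> (0,1] is the
  point at offset v in it.\<close>

definition block_point :: "nat \<Rightarrow> nat \<Rightarrow> real \<Rightarrow> real" where
  "block_point m i v = (real i + v) / (2 * real m)"

definition block_index :: "nat \<Rightarrow> real \<Rightarrow> nat" where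
  "block_index m x = nat (\<lceil>x * (2 * real m)\<rceil> - 1)"

definition block_offset :: "nat \<Rightarrow> real \<Rightarrow> real" where
  "block_offset m x = x * (2 * real m) - real (block_index m x)"

lemma block_point_diff:
  "block_point m j w - block_point m i v = (real j - real i + (w - v)) / (2 * real m)"
  unfolding block_point_def by (simp add: diff_divide_distrib[symmetric] algebra_simps)

lemma block_point_inverse: "0 < m \<Longrightarrow> block_point m i (t * (2 * real m) - real i) = t"
  unfolding block_point_def by simp

lemma block_point_less_iff: "0 < m \<Longrightarrow> block_point m i s < block_point m i u \<longleftrightarrow> s < u"
  unfolding block_point_def by (simp add: divide_less_cancel)

lemma block_point_le_iff: "0 < m \<Longrightarrow> block_point m i s \<le> block_point m i u \<longleftrightarrow> s \<le> u"
  unfolding block_point_def by (simp add: divide_le_cancel)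

lemma block_point_one: "block_point m i 1 = block_point m (Suc i) 0"
  unfolding block_point_def by simp

lemma block_point_coordinates:
  assumes m: "0 < m" and i: "i < m" and v: "v \<in> {0<..1}"
  shows "block_point m i v \<in> {0<..1/2}"
    and "block_index m (block_point m i v) = i"
    and "block_offset m (block_point m i v) = v"
proof -
  have scale: "block_point m i v * (2 * real m) = real i + v"
    using m unfolding block_point_def by simp
  have "\<lceil>real i + v\<rceil> = int i + 1"
    by (rule ceiling_unique) (use v in auto)
  then show index: "block_index m (block_point m i v) = i"
    unfolding block_index_def scale by simp
  show "block_offset m (block_point m i v) = v"
    unfolding block_offset_def index scale by simp
  have "real i + 1 \<le> real m" using i by linarith
  then have "real i + v \<le> real m" using v by simp
  then show "block_point m i v \<in> {0<..1/2}"
    using m v unfolding block_point_def by (auto simp: divide_le_eq)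
qed

lemma block_coordinates:
  assumes m: "0 < m" and x: "x \<in> {0<..1/2}"
  shows "block_index m x < m" and "block_offset m x \<in> {0<..1}"
    and "block_point m (block_index m x) (block_offset m x) = x"
proof -
  define z where "z = x * (2 * real m)"
  have "x * (2 * real m) \<le> 1/2 * (2 * real m)" using x m by (intro mult_right_mono) auto
  then have z: "0 < z" "z \<le> real m" using m x unfolding z_def by auto
  then have c: "1 \<le> \<lceil>z\<rceil>" "\<lceil>z\<rceil> \<le> int m" by (simp_all add: le_ceiling_iff ceiling_le_iff)
  then have index: "real (block_index m x) = real_of_int \<lceil>z\<rceil> - 1"
    unfolding block_index_def z_def[symmetric] by simp
  show "block_index m x < m" unfolding block_index_def z_def[symmetric] using c by linarith
  have "real_of_int \<lceil>z\<rceil> - 1 < z" "z \<le> real_of_int \<lceil>z\<rceil>" by linarith+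
  then show "block_offset m x \<in> {0<..1}"
    unfolding block_offset_def z_def[symmetric] index by simp
  show "block_point m (block_index m x) (block_offset m x) = x"
    using m unfolding block_point_def block_offset_def by simp
qed

definition block_map :: "nat \<Rightarrow> (nat \<Rightarrow> nat) \<Rightarrow> (nat \<Rightarrow> real \<Rightarrow> real) \<Rightarrow> real \<Rightarrow> real" where
  "block_map m \<pi> f x = (if x \<in> {0<..1/2}
     then block_point m (\<pi> (block_index m x)) (close_at_one (f (block_index m x)) (block_offset m x))
     else x)"

lemma block_map_outside: "x \<notin> {0<..1/2} \<Longrightarrow> block_map m \<pi> f x = x"
  unfolding block_map_def by (rule if_not_P)

lemma block_map_block_point:
  assumes "0 < m" "i < m" "v \<in> {0<..1}"
  shows "block_map m \<pi> f (block_point m i v) = block_point m (\<pi> i) (close_at_one (f i) v)"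
  using block_point_coordinates[OF assms] by (simp add: block_map_def)

lemma block_map_cases:
  assumes m: "0 < m"
  obtains "x \<notin> {0<..1/2}"
  | i v where "i < m" "v \<in> {0<..1}" "x = block_point m i v"
  using block_coordinates[OF m] by metis

lemma block_map_maps_to:
  assumes m: "0 < m" and \<pi>: "\<forall>i<m. \<pi> i < m" and f: "\<forall>i<m. is_iet (f i)" and x: "x \<in> {0..<1}"
  shows "block_map m \<pi> f x \<in> {0..<1}"
  using m x
proof (cases rule: block_map_cases[where x = x])
  case (2 i v)
  then have "close_at_one (f i) v \<in> {0<..1}" using f close_at_one_maps_to by blast
  then show ?thesis
    using block_map_block_point[OF m 2(1,2)] block_point_coordinates(1)[OF m] \<pi> 2 by fastforce
qed (simp add: block_map_outside)

lemma block_map_comp: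
  assumes m: "0 < m" and \<pi>': "\<forall>i<m. \<pi>' i < m" and f': "\<forall>i<m. is_iet (f' i)"
  shows "block_map m \<pi> f \<circ> block_map m \<pi>' f' = block_map m (\<pi> \<circ> \<pi>') (\<lambda>i. f (\<pi>' i) \<circ> f' i)"
proof
  fix x
  show "(block_map m \<pi> f \<circ> block_map m \<pi>' f') x = block_map m (\<pi> \<circ> \<pi>') (\<lambda>i. f (\<pi>' i) \<circ> f' i) x"
    using m
  proof (cases rule: block_map_cases[where x = x])
    case (2 i v)
    then have "close_at_one (f' i) v \<in> {0<..1}" using f' close_at_one_maps_to by blast
    then show ?thesis
      using 2 \<pi>' f' by (simp add: block_map_block_point[OF m] close_at_one_comp)
  qed (simp add: block_map_outside)
qed

lemma block_map_cong:
  assumes m: "0 < m" and "\<forall>i<m. \<pi> i = \<pi>' i" and "\<forall>i<m. f i = f' i"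
  shows "block_map m \<pi> f = block_map m \<pi>' f'"
proof
  fix x
  show "block_map m \<pi> f x = block_map m \<pi>' f' x"
    using m by (cases rule: block_map_cases[where x = x]) (simp_all add: block_map_outside block_map_block_point assms)
qed

lemma block_map_id: "0 < m \<Longrightarrow> block_map m (\<lambda>i. i) (\<lambda>i. id) = id"
proof
  fix x
  assume m: "0 < m"
  then show "block_map m (\<lambda>i. i) (\<lambda>i. id) x = id x"
    by (cases rule: block_map_cases[where x = x]) (simp_all add: block_map_outside block_map_block_point)
qed

lemma block_map_sub_block_point:
  assumes "0 < m" "i < m" "s \<in> {0<..1}"
  shows "block_map m \<pi> f (block_point m i s) - block_point m i s
    = (real (\<pi> i) - real i + (close_at_one (f i) s - s)) / (2 * real m)"
  using block_point_diff block_map_block_point[OF assms] by simp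

lemma block_map_left_translation_piece:
  assumes m: "0 < m" and f: "\<forall>i<m. is_iet (f i)" and x: "x \<in> {0<..<1}"
  obtains p where "p < x" "\<forall>t\<in>{p<..x}. block_map m \<pi> f t - t = block_map m \<pi> f x - x"
  using m
proof (cases rule: block_map_cases[where x = x])
  case 1
  then show ?thesis using that[of "1/2"] x by (auto simp: block_map_outside)
next
  case (2 i u)
  obtain p where p: "0 \<le> p" "p < u" "\<forall>s\<in>{p<..u}. close_at_one (f i) s - s = close_at_one (f i) u - u"
    using close_at_one_left_translation_piece f 2 by metis
  show ?thesis
  proof (rule that[of "block_point m i p"])
    show "block_point m i p < x" using 2 p by (simp add: block_point_less_iff[OF m])
    show "\<forall>t\<in>{block_point m i p<..x}. block_map m \<pi> f t - t = block_map m \<pi> f x - x"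
    proof
      fix t assume t: "t \<in> {block_point m i p<..x}"
      define s where "s = t * (2 * real m) - real i"
      have ts: "t = block_point m i s" unfolding s_def using block_point_inverse[OF m] by simp
      with t 2(3) have s: "s \<in> {p<..u}"
        by (simp add: block_point_less_iff[OF m] block_point_le_iff[OF m])
      with p 2(2) have "s \<in> {0<..1}" by auto
      then have "block_map m \<pi> f t - t
          = (real (\<pi> i) - real i + (close_at_one (f i) s - s)) / (2 * real m)"
        unfolding ts by (rule block_map_sub_block_point[OF m 2(1)])
      also have "\<dots> = (real (\<pi> i) - real i + (close_at_one (f i) u - u)) / (2 * real m)"
        using p(3) s by (metis (no_types))
      also have "\<dots> = block_map m \<pi> f x - x"
        unfolding 2(3) by (rule block_map_sub_block_point[OF m 2(1,2), symmetric])
      finally show "block_map m \<pi> f t - t = block_map m \<pi> f x - x" .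
    qed
  qed
qed

lemma block_map_local_translation:
  assumes m: "0 < m" and i: "i < m" and D: "locally_translation_off (f i) D" and u: "u \<in> {0<..<1} - D"
  obtains e where "e > 0" "\<forall>y\<in>{0..<1}. \<bar>y - block_point m i u\<bar> < e \<longrightarrow>
      block_map m \<pi> f y - y = block_map m \<pi> f (block_point m i u) - block_point m i u"
proof -
  obtain e where e: "e > 0"
    "\<forall>s\<in>{0<..<1}. \<bar>s - u\<bar> < e \<longrightarrow> close_at_one (f i) s - s = close_at_one (f i) u - u"
    using close_at_one_local_translation[OF D u] .
  let ?d = "min e (min u (1 - u)) / (2 * real m)"
  show ?thesis
  proof (rule that[of ?d])
    show "?d > 0" using e u m by auto
    show "\<forall>y\<in>{0..<1}. \<bar>y - block_point m i u\<bar> < ?d \<longrightarrow>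
      block_map m \<pi> f y - y = block_map m \<pi> f (block_point m i u) - block_point m i u"
    proof (intro ballI impI)
      fix y assume "\<bar>y - block_point m i u\<bar> < ?d"
      define s where "s = y * (2 * real m) - real i"
      have ys: "y = block_point m i s" unfolding s_def using block_point_inverse[OF m] by simp
      have "\<bar>s - u\<bar> = \<bar>y - block_point m i u\<bar> * (2 * real m)"
        using block_point_diff[of m i s i u] m by (simp add: ys abs_divide)
      also have "\<dots> < min e (min u (1 - u))"
        using \<open>\<bar>y - block_point m i u\<bar> < ?d\<close> m by (simp add: less_divide_eq)
      finally have s: "s \<in> {0<..<1}" "\<bar>s - u\<bar> < e" by auto
      then have "close_at_one (f i) s - s = close_at_one (f i) u - u" using e(2) by blast
      then show "block_map m \<pi> f y - y = block_map m \<pi> f (block_point m i u) - block_point m i u"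
        using s u unfolding ys by (simp add: block_map_sub_block_point[OF m i])
    qed
  qed
qed

lemma block_map_breakpoints:
  assumes m: "0 < m" and f: "\<forall>i<m. is_iet (f i)"
  obtains D where "finite D" "locally_translation_off (block_map m \<pi> f) D"
proof -
  have "\<forall>i<m. \<exists>D. finite D \<and> locally_translation_off (f i) D" using f iet_breakpoints by blast
  then obtain Df where Df: "\<forall>i<m. finite (Df i) \<and> locally_translation_off (f i) (Df i)"
    by metis
  define D where "D = (\<lambda>k. block_point m k 0) ` {..m} \<union> (\<Union>i<m. block_point m i ` Df i)"
  have "locally_translation_off (block_map m \<pi> f) D"
    unfolding locally_translation_off_def
  proof
    fix x assume x: "x \<in> {0..<1} - D"
    show "\<exists>e>0. \<forall>y\<in>{0..<1}. \<bar>y - x\<bar> < e \<longrightarrow> block_map m \<pi> f y - y = block_map m \<pi> f x - x"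
      using m
    proof (cases rule: block_map_cases[where x = x])
      case 1
      have "block_point m 0 0 \<in> D" "block_point m m 0 \<in> D" unfolding D_def by auto
      then have "0 \<in> D" "1/2 \<in> D" using m by (simp_all add: block_point_def)
      then have "x \<noteq> 0" "x \<noteq> 1/2" using x by blast+
      then have "1/2 < x" using 1 x by auto
      moreover have "block_map m \<pi> f y = y" if "\<bar>y - x\<bar> < x - 1/2" for y
        using that by (intro block_map_outside) (auto simp: abs_less_iff)
      ultimately show ?thesis using 1 by (intro exI[of _ "x - 1/2"]) (auto simp: block_map_outside)
    next
      case (2 i u)
      have "u \<noteq> 1" using x 2 unfolding D_def by (auto simp: block_point_one)
      moreover have "u \<notin> Df i" using x 2 unfolding D_def by auto
      ultimately obtain e where "e > 0" "\<forall>y\<in>{0..<1}. \<bar>y - x\<bar> < e \<longrightarrow>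
          block_map m \<pi> f y - y = block_map m \<pi> f x - x"
        using block_map_local_translation[OF m 2(1), of f "Df i" u] Df 2 by auto
      then show ?thesis by blast
    qed
  qed
  moreover have "finite D" using Df unfolding D_def by auto
  ultimately show ?thesis using that by blast
qed

lemma block_map_iet:
  assumes m: "0 < m" and f: "\<forall>i<m. is_iet (f i)"
    and bij: "bij_betw (block_map m \<pi> f) {0..<1} {0..<1}"
  shows "is_iet (block_map m \<pi> f)"
proof -
  obtain D where "finite D" "locally_translation_off (block_map m \<pi> f) D"
    using block_map_breakpoints[OF m f] .
  then show ?thesis
  proof (intro is_ietI[OF bij])
    show "block_map m \<pi> f x = x" if "x \<notin> {0..<1}" for x
      using that by (intro block_map_outside) auto
    show "\<exists>p<x. \<forall>t\<in>{p<..x}. block_map m \<pi> f t - t = block_map m \<pi> f x - x"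
      if "x \<in> {0<..<1}" for x
      using block_map_left_translation_piece[OF m f that] by blast
  qed
qed

lemma block_map_eqD:
  assumes m: "0 < m" and i: "i < m" and "\<pi> i < m" "\<pi>' i < m" and f: "is_iet (f i)" "is_iet (f' i)"
    and eq: "block_map m \<pi> f = block_map m \<pi>' f'"
  shows "\<pi> i = \<pi>' i" and "f i = f' i"
proof -
  have *: "\<pi> i = \<pi>' i \<and> f i v = f' i v" if v: "v \<in> {0<..<1}" for v
  proof -
    have "close_at_one (f i) v \<in> {0<..1}" "close_at_one (f' i) v \<in> {0<..1}"
      using close_at_one_maps_to(1) f v by auto
    moreover have "block_point m (\<pi> i) (close_at_one (f i) v) = block_point m (\<pi>' i) (close_at_one (f' i) v)"
      using eq block_map_block_point[OF m i, of v] v by (metis greaterThanAtMost_iff greaterThanLessThan_iff less_eq_real_def)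
    ultimately show ?thesis
      using block_point_coordinates(2,3)[OF m] assms(3,4) v by (metis close_at_one_def less_irrefl greaterThanLessThan_iff)
  qed
  then show "\<pi> i = \<pi>' i" using *[of "1/2"] by simp
  show "f i = f' i" using iet_eqI[OF f] * by blast
qed

section \<open>Induced representations\<close>

text \<open>The data of a representation induced from H: G acts on m points by \<tau>, and c is an
  H-valued cocycle of this action.\<close>

locale coset_cocycle = group G for G (structure) +
  fixes H :: "'a set" and m :: nat and \<tau> :: "'a \<Rightarrow> nat \<Rightarrow> nat" and c :: "'a \<Rightarrow> nat \<Rightarrow> 'a"
  assumes subgroup: "subgroup H G" and m_pos: "0 < m"
    and \<tau>_less: "\<And>g i. g \<in> carrier G \<Longrightarrow> i < m \<Longrightarrow> \<tau> g i < m"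
    and \<tau>_mult: "\<And>g h i. g \<in> carrier G \<Longrightarrow> h \<in> carrier G \<Longrightarrow> i < m \<Longrightarrow> \<tau> (g \<otimes> h) i = \<tau> g (\<tau> h i)"
    and \<tau>_one: "\<And>i. i < m \<Longrightarrow> \<tau> \<one> i = i"
    and c_mem: "\<And>g i. g \<in> carrier G \<Longrightarrow> i < m \<Longrightarrow> c g i \<in> H"
    and c_mult: "\<And>g h i. g \<in> carrier G \<Longrightarrow> h \<in> carrier G \<Longrightarrow> i < m \<Longrightarrow>
      c (g \<otimes> h) i = c g (\<tau> h i) \<otimes> c h i"
    and c_one: "\<And>i. i < m \<Longrightarrow> c \<one> i = \<one>"
    and \<tau>_c_inj: "\<And>g h. g \<in> carrier G \<Longrightarrow> h \<in> carrier G \<Longrightarrow> \<tau> g 0 = \<tau> h 0 \<Longrightarrow> c g 0 = c h 0 \<Longrightarrow> g = h"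

locale rcoset_transversal = group G for G (structure) +
  fixes H :: "'a set" and m :: nat and r :: "nat \<Rightarrow> 'a"
  assumes transversal_subgroup: "subgroup H G" and transversal_size: "0 < m"
    and transversal_closed: "\<And>i. i < m \<Longrightarrow> r i \<in> carrier G"
    and transversal_bij: "bij_betw (\<lambda>i. H #> r i) {..<m} (rcosets H)"
begin

definition rcoset_action :: "'a \<Rightarrow> nat \<Rightarrow> nat" where
  "rcoset_action g i = the_inv_into {..<m} (\<lambda>i. H #> r i) (H #> (r i \<otimes> inv g))"

definition rcoset_cocycle :: "'a \<Rightarrow> nat \<Rightarrow> 'a" where
  "rcoset_cocycle g i = r (rcoset_action g i) \<otimes> g \<otimes> inv (r i)"

lemma rcoset_action:
  assumes "g \<in> carrier G" "i < m"
  shows "rcoset_action g i < m" and "H #> r (rcoset_action g i) = H #> (r i \<otimes> inv g)"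
proof -
  have "H #> (r i \<otimes> inv g) \<in> (\<lambda>i. H #> r i) ` {..<m}"
    using bij_betw_imp_surj_on[OF transversal_bij] assms transversal_closed
      rcosetsI[OF subgroup.subset[OF transversal_subgroup]] by auto
  then show "rcoset_action g i < m" "H #> r (rcoset_action g i) = H #> (r i \<otimes> inv g)"
    unfolding rcoset_action_def
    using the_inv_into_into f_the_inv_into_f bij_betw_imp_inj_on[OF transversal_bij]
    by (metis lessThan_iff order_refl)+
qed

lemma transversal_eqD: "j < m \<Longrightarrow> j' < m \<Longrightarrow> H #> r j = H #> r j' \<Longrightarrow> j = j'"
  using bij_betw_imp_inj_on[OF transversal_bij] by (auto dest: inj_onD)

lemma rcoset_action_mult:
  assumes g: "g \<in> carrier G" "h \<in> carrier G" and i: "i < m"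
  shows "rcoset_action (g \<otimes> h) i = rcoset_action g (rcoset_action h i)"
proof (rule transversal_eqD)
  let ?j = "rcoset_action h i"
  have H: "H \<subseteq> carrier G" using subgroup.subset[OF transversal_subgroup] .
  have j: "?j < m" "H #> r ?j = H #> (r i \<otimes> inv h)" using rcoset_action g i by auto
  have "H #> r (rcoset_action (g \<otimes> h) i) = H #> (r i \<otimes> inv h \<otimes> inv g)"
    using rcoset_action transversal_closed g i by (simp add: inv_mult_group m_assoc)
  also have "\<dots> = (H #> r ?j) #> inv g"
    unfolding j(2) using transversal_closed g i H by (simp add: coset_mult_assoc)
  also have "\<dots> = H #> r (rcoset_action g ?j)"
    using rcoset_action[OF g(1) j(1)] transversal_closed g j(1) H by (simp add: coset_mult_assoc)
  finally show "H #> r (rcoset_action (g \<otimes> h) i) = H #> r (rcoset_action g ?j)" .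
qed (use rcoset_action g i in auto)

lemma rcoset_action_one: "i < m \<Longrightarrow> rcoset_action \<one> i = i"
  using transversal_eqD rcoset_action transversal_closed by simp

lemma rcoset_cocycle_mem:
  assumes "g \<in> carrier G" "i < m"
  shows "rcoset_cocycle g i \<in> H"
proof -
  have r: "r i \<in> carrier G" "r (rcoset_action g i) \<in> carrier G"
    using transversal_closed rcoset_action assms by auto
  have "r (rcoset_action g i) \<in> H #> (r i \<otimes> inv g)"
    using rcoset_action(2)[OF assms] rcos_self[OF r(2) transversal_subgroup] by simp
  then have "r (rcoset_action g i) \<otimes> inv (r i \<otimes> inv g) \<in> H"
    using subgroup.rcos_module_imp[OF transversal_subgroup is_group] r assms by simp
  then show ?thesis unfolding rcoset_cocycle_def using r assms by (simp add: inv_mult_group m_assoc)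
qed

lemma rcoset_cocycle_mult:
  assumes "g \<in> carrier G" "h \<in> carrier G" "i < m"
  shows "rcoset_cocycle (g \<otimes> h) i = rcoset_cocycle g (rcoset_action h i) \<otimes> rcoset_cocycle h i"
proof -
  define j where "j = rcoset_action h i"
  have r: "r j \<in> carrier G" "r (rcoset_action g j) \<in> carrier G" "r i \<in> carrier G"
    using rcoset_action transversal_closed assms unfolding j_def by auto
  have "inv (r j) \<otimes> (r j \<otimes> (h \<otimes> inv (r i))) = h \<otimes> inv (r i)"
    using r assms by (simp add: m_assoc[symmetric])
  then show ?thesis
    using r assms unfolding rcoset_cocycle_def rcoset_action_mult[OF assms] j_def[symmetric]
    by (simp add: m_assoc)
qed

lemma coset_cocycle: "coset_cocycle G H m rcoset_action rcoset_cocycle"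
proof (intro coset_cocycle.intro coset_cocycle_axioms.intro is_group transversal_subgroup transversal_size)
  show "rcoset_cocycle \<one> i = \<one>" if "i < m" for i
    unfolding rcoset_cocycle_def using rcoset_action_one transversal_closed that by simp
  show "g = h" if "g \<in> carrier G" "h \<in> carrier G"
    "rcoset_action g 0 = rcoset_action h 0" "rcoset_cocycle g 0 = rcoset_cocycle h 0" for g h
    using that rcoset_action[of _ 0] transversal_closed transversal_size
    unfolding rcoset_cocycle_def by simp
qed (simp_all add: rcoset_action rcoset_action_mult rcoset_action_one rcoset_cocycle_mem
    rcoset_cocycle_mult)

end

lemma (in group) rcoset_transversal_exists:
  assumes H: "subgroup H G" and fin: "finite (rcosets H)"
  obtains m r where "rcoset_transversal G H m r"
proof -
  obtain e where e: "bij_betw e {..<card (rcosets H)} (rcosets H)"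
    using ex_bij_betw_nat_finite[OF fin] atLeast0LessThan by auto
  have "\<exists>x. x \<in> carrier G \<and> e i = H #> x" if "i < card (rcosets H)" for i
    using bij_betwE[OF e] that unfolding RCOSETS_def by auto
  then obtain r where r: "\<forall>i<card (rcosets H). r i \<in> carrier G \<and> e i = H #> r i" by metis
  have "H \<in> rcosets H"
    using rcosetsI[OF subgroup.subset[OF H] one_closed] coset_mult_one[OF subgroup.subset[OF H]] by simp
  then have "0 < card (rcosets H)" using fin card_gt_0_iff by blast
  moreover have "bij_betw (\<lambda>i. H #> r i) {..<card (rcosets H)} (rcosets H)"
    using bij_betw_cong[of "{..<card (rcosets H)}" e] e r by auto
  ultimately have "rcoset_transversal G H (card (rcosets H)) r"
    using r by (intro rcoset_transversal.intro rcoset_transversal_axioms.intro is_group H) auto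
  then show ?thesis by (rule that)
qed

lemma (in group) finite_index_coset_cocycle:
  assumes "subgroup H G" and "finite (rcosets H)"
  obtains m \<tau> c where "coset_cocycle G H m \<tau> c"
proof -
  obtain m r where "rcoset_transversal G H m r" using rcoset_transversal_exists[OF assms] .
  then show ?thesis using rcoset_transversal.coset_cocycle that by blast
qed

lemma IET_hom_is_iet: "\<phi> \<in> hom K IET \<Longrightarrow> a \<in> carrier K \<Longrightarrow> is_iet (\<phi> a)"
  unfolding hom_def IET_def by auto

lemma IET_hom_mult:
  "\<phi> \<in> hom K IET \<Longrightarrow> a \<in> carrier K \<Longrightarrow> b \<in> carrier K \<Longrightarrow> \<phi> (a \<otimes>\<^bsub>K\<^esub> b) = \<phi> a \<circ> \<phi> b"
  unfolding hom_def IET_def by auto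

lemma IET_hom_one:
  assumes "monoid K" and "\<phi> \<in> hom K IET"
  shows "\<phi> \<one>\<^bsub>K\<^esub> = id"
  using iet_idempotent_eq_id IET_hom_is_iet[OF assms(2)] IET_hom_mult[OF assms(2)]
    monoid.one_closed[OF assms(1)] monoid.l_one[OF assms(1)] by metis

context coset_cocycle
begin

definition induced_iet :: "('a \<Rightarrow> real \<Rightarrow> real) \<Rightarrow> 'a \<Rightarrow> real \<Rightarrow> real" where
  "induced_iet \<phi> g = block_map m (\<tau> g) (\<lambda>i. \<phi> (c g i))"

context
  fixes \<phi> assumes \<phi>: "\<phi> \<in> hom (G\<lparr>carrier := H\<rparr>) IET"
begin

lemma induced_iet_blocks_iet: "g \<in> carrier G \<Longrightarrow> \<forall>i<m. is_iet (\<phi> (c g i))"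
  using IET_hom_is_iet[OF \<phi>] c_mem by simp

lemma induced_iet_mult:
  assumes g: "g \<in> carrier G" and h: "h \<in> carrier G"
  shows "induced_iet \<phi> g \<circ> induced_iet \<phi> h = induced_iet \<phi> (g \<otimes> h)"
proof -
  have "induced_iet \<phi> g \<circ> induced_iet \<phi> h
      = block_map m (\<tau> g \<circ> \<tau> h) (\<lambda>i. \<phi> (c g (\<tau> h i)) \<circ> \<phi> (c h i))"
    unfolding induced_iet_def
    by (rule block_map_comp[OF m_pos]) (use \<tau>_less induced_iet_blocks_iet h in auto)
  also have "\<dots> = induced_iet \<phi> (g \<otimes> h)"
    unfolding induced_iet_def
  proof (rule block_map_cong[OF m_pos])
    show "\<forall>i<m. (\<tau> g \<circ> \<tau> h) i = \<tau> (g \<otimes> h) i" using \<tau>_mult g h by simp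
    show "\<forall>i<m. \<phi> (c g (\<tau> h i)) \<circ> \<phi> (c h i) = \<phi> (c (g \<otimes> h) i)"
      using c_mult IET_hom_mult[OF \<phi>] c_mem \<tau>_less g h by simp
  qed
  finally show ?thesis .
qed

lemma induced_iet_one: "induced_iet \<phi> \<one> = id"
proof -
  have "\<phi> \<one> = id"
    using IET_hom_one[OF group.is_monoid[OF subgroup_imp_group[OF subgroup]] \<phi>] by simp
  then show ?thesis
    unfolding induced_iet_def
    by (simp add: block_map_cong[OF m_pos, of _ "\<lambda>i. i" _ "\<lambda>i. id"] \<tau>_one c_one block_map_id[OF m_pos])
qed

lemma induced_iet_is_iet:
  assumes g: "g \<in> carrier G"
  shows "is_iet (induced_iet \<phi> g)"
proof -
  have maps_to: "induced_iet \<phi> h ` {0..<1} \<subseteq> {0..<1}" if h: "h \<in> carrier G" for h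
  proof -
    have "\<forall>i<m. \<tau> h i < m" using \<tau>_less h by blast
    then show ?thesis unfolding induced_iet_def
      using block_map_maps_to[OF m_pos _ induced_iet_blocks_iet[OF h]] by blast
  qed
  have inverse: "induced_iet \<phi> h (induced_iet \<phi> h' x) = x"
    if "h \<in> carrier G" "h' \<in> carrier G" "h \<otimes> h' = \<one>" for h h' x
  proof -
    have "induced_iet \<phi> h \<circ> induced_iet \<phi> h' = id"
      using induced_iet_mult[OF that(1,2)] that(3) induced_iet_one by simp
    then show ?thesis by (metis comp_apply id_apply)
  qed
  have "bij_betw (induced_iet \<phi> g) {0..<1} {0..<1}"
  proof (rule bij_betw_byWitness[where f' = "induced_iet \<phi> (inv g)"])
    show "\<forall>x\<in>{0..<1}. induced_iet \<phi> (inv g) (induced_iet \<phi> g x) = x"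
      using inverse[of "inv g" g] g by simp
    show "\<forall>x\<in>{0..<1}. induced_iet \<phi> g (induced_iet \<phi> (inv g) x) = x"
      using inverse[of g "inv g"] g by simp
  qed (use g maps_to in simp_all)
  then show ?thesis
    unfolding induced_iet_def by (rule block_map_iet[OF m_pos induced_iet_blocks_iet[OF g]])
qed

lemma induced_iet_hom: "induced_iet \<phi> \<in> hom G IET"
  using induced_iet_is_iet induced_iet_mult unfolding hom_def IET_def by auto

lemma induced_iet_inj:
  assumes "inj_on \<phi> H"
  shows "inj_on (induced_iet \<phi>) (carrier G)"
proof (rule inj_onI)
  fix g h assume g: "g \<in> carrier G" and h: "h \<in> carrier G" and eq: "induced_iet \<phi> g = induced_iet \<phi> h"
  have "\<tau> g 0 = \<tau> h 0" and "\<phi> (c g 0) = \<phi> (c h 0)"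
    using block_map_eqD[OF m_pos m_pos, of "\<tau> g" "\<tau> h" "\<lambda>i. \<phi> (c g i)" "\<lambda>i. \<phi> (c h i)"]
      eq \<tau>_less induced_iet_blocks_iet g h m_pos unfolding induced_iet_def by auto
  moreover have "c g 0 = c h 0"
    using inj_onD[OF assms calculation(2)] c_mem g h m_pos by blast
  ultimately show "g = h" using \<tau>_c_inj g h by blast
qed

end

end

lemma (in group) embeds_in_IET_if_finite_index:
  assumes "subgroup H G" and "finite (rcosets H)" and "embeds_in_IET (G\<lparr>carrier := H\<rparr>)"
  shows "embeds_in_IET G"
proof -
  obtain \<phi> where \<phi>: "\<phi> \<in> hom (G\<lparr>carrier := H\<rparr>) IET" "inj_on \<phi> H"
    using assms(3) unfolding embeds_in_IET_def by auto
  obtain m \<tau> c where "coset_cocycle G H m \<tau> c"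
    using finite_index_coset_cocycle[OF assms(1,2)] .
  then interpret coset_cocycle G H m \<tau> c .
  show ?thesis
    unfolding embeds_in_IET_def using induced_iet_hom[OF \<phi>(1)] induced_iet_inj[OF \<phi>] by blast
qed

theorem mainTheorem8:
  fixes G :: "('a, 'b) monoid_scheme" and H :: "'a set"
  assumes "group G"
    and "subgroup H G"
    and "finite (rcosets\<^bsub>G\<^esub> H)"
    and "embeds_in_IET (G\<lparr>carrier := H\<rparr>)"
  shows "embeds_in_IET G"
  using group.embeds_in_IET_if_finite_index[OF assms] .

end
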